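(* For every regular language $L\subseteq\Sigma^*$, there is an isomorphism of $\mathbf{JSL}$-dfas $\mathcal{P}(\mathrm{minDfa}(L^r))\cong[\mathrm{BLQ}(L)]^{\mathsf{op}}$ given by \[\{w_1^{-1}L^r,\ldots,w_n^{-1}L^r\}\mapsto\bigcap_{i=1}^n\overline{\mathrm{At}(w_i^r)},\] where $\mathrm{At}(x)$ is the unique atom of the boolean algebra $\mathrm{BLQ}(L)$ containing the word $x$.
   Context: $u^{-1}L=\{w:uw\in L\}$; $w^r$ is the reversal of $w$ and $L^r=\{w^r:w\in L\}$; $\overline{K}=\Sigma^*\setminus K$. $\mathrm{BLQ}(L)$ is the boolean subalgebra of $\mathcal{P}(\Sigma^* )$ generated by all left derivatives $u^{-1}L$ (finite when $L$ is regular), viewed as a $\mathbf{JSL}$-dfa with order $\subseteq$, transitions $K\mapsto a^{-1}K$, initial state $L$, final states the $K$ with $\epsilon\in K$. The minimal dfa $\mathrm{minDfa}(L^r)$ has states $\{v^{-1}L^r:v\in\Sigma^*\}$, transitions $K\mapsto a^{-1}K$, initial state $L^r$, final states those containing $\epsilon$. For a (deterministic or nondeterministic) finite automaton $N$ with state set $Q$, $\mathcal{P}(N)$ is the $\mathbf{JSL}$-dfa with states $(\mathcal{P}(Q),\cup)$, transitions $X\mapsto\delta_a[X]$, initial state the set of initial states, final states the subsets meeting the final states. A $\mathbf{JSL}$-dfa is a finite semilattice with join-preserving transitions $\delta_a$, an initial state $s_0$ and final states $\{s:s\not\le s_f\}$ for some $s_f$; morphisms are join-preserving maps preserving transitions,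 initial and final states (both ways). The dual $A^{\mathsf{op}}$ has the reversed order, transitions $\delta^*_a(s)=$ largest $t$ with $\delta_a(t)\le s$, initial state the largest non-final state of $A$, final states $\{s:s_0\not\le s\}$. *)

theory Defs
  imports Main
begin

definition lq :: "'a list \<Rightarrow> 'a list set \<Rightarrow> 'a list set" where
  "lq u L = {w. u @ w \<in> L}"

definition lrev :: "'a list set \<Rightarrow> 'a list set" where
  "lrev L = rev ` L"

text \<open>Regular language: accepted by some finite deterministic automaton
  (states taken from nat, which is no loss of generality).\<close>
definition regular :: "'a list set \<Rightarrow> bool" where
  "regular L \<longleftrightarrow> (\<exists>(Q::nat set) \<delta> q0 F. finite Q \<and> q0 \<in> Q \<and>
      (\<forall>a q. q \<in> Q \<longrightarrow> \<delta> a q \<in> Q) \<and> F \<subseteq> Q \<and>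
      L = {w. fold \<delta> w q0 \<in> F})"

inductive_set BLQ :: "'a list set \<Rightarrow> 'a list set set" for L where
  gen: "lq u L \<in> BLQ L"
| compl: "K \<in> BLQ L \<Longrightarrow> - K \<in> BLQ L"
| inter: "K \<in> BLQ L \<Longrightarrow> K' \<in> BLQ L \<Longrightarrow> K \<inter> K' \<in> BLQ L"
| union: "K \<in> BLQ L \<Longrightarrow> K' \<in> BLQ L \<Longrightarrow> K \<union> K' \<in> BLQ L"
| empty: "{} \<in> BLQ L"
| univ: "UNIV \<in> BLQ L"

definition blq_atom :: "'a list set \<Rightarrow> 'a list set \<Rightarrow> bool" where
  "blq_atom L A \<longleftrightarrow> A \<in> BLQ L \<and> A \<noteq> {} \<and>
     (\<forall>B \<in> BLQ L. B \<subseteq> A \<longrightarrow> B = {} \<or> B = A)"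

definition At :: "'a list set \<Rightarrow> 'a list \<Rightarrow> 'a list set" where
  "At L x = (THE A. blq_atom L A \<and> x \<in> A)"

record ('s, 'a) jdfa =
  st   :: "'s set"
  le   :: "'s \<Rightarrow> 's \<Rightarrow> bool"
  tr   :: "'a \<Rightarrow> 's \<Rightarrow> 's"
  init :: "'s"
  fin  :: "'s set"

definition jn :: "('s, 'a, 'z) jdfa_scheme \<Rightarrow> 's \<Rightarrow> 's \<Rightarrow> 's" where
  "jn A x y = (THE z. z \<in> st A \<and> le A x z \<and> le A y z \<and>
                 (\<forall>w \<in> st A. le A x w \<and> le A y w \<longrightarrow> le A z w))"

definition jbot :: "('s, 'a, 'z) jdfa_scheme \<Rightarrow> 's" where
  "jbot A = (THE z. z \<in> st A \<and> (\<forall>w \<in> st A. le A z w))"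

definition jsl_dfa :: "('s, 'a, 'z) jdfa_scheme \<Rightarrow> bool" where
  "jsl_dfa A \<longleftrightarrow> finite (st A) \<and>
     (\<forall>x \<in> st A. le A x x) \<and>
     (\<forall>x \<in> st A. \<forall>y \<in> st A. le A x y \<and> le A y x \<longrightarrow> x = y) \<and>
     (\<forall>x \<in> st A. \<forall>y \<in> st A. \<forall>z \<in> st A. le A x y \<and> le A y z \<longrightarrow> le A x z) \<and>
     (\<exists>b \<in> st A. \<forall>w \<in> st A. le A b w) \<and>
     (\<forall>x \<in> st A. \<forall>y \<in> st A. \<exists>z \<in> st A. le A x z \<and> le A y z \<and>
        (\<forall>w \<in> st A. le A x w \<and> le A y w \<longrightarrow> le A z w)) \<and>
     (\<forall>a. \<forall>x \<in> st A. tr A a x \<in> st A) \<and>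
     (\<forall>a. \<forall>x \<in> st A. \<forall>y \<in> st A. tr A a (jn A x y) = jn A (tr A a x) (tr A a y)) \<and>
     (\<forall>a. tr A a (jbot A) = jbot A) \<and>
     init A \<in> st A \<and>
     (\<exists>sf \<in> st A. fin A = {s \<in> st A. \<not> le A s sf})"

definition jsl_iso :: "('s, 'a, 'z) jdfa_scheme \<Rightarrow> ('t, 'a, 'y) jdfa_scheme \<Rightarrow> ('s \<Rightarrow> 't) \<Rightarrow> bool" where
  "jsl_iso A B f \<longleftrightarrow> bij_betw f (st A) (st B) \<and>
     (\<forall>x \<in> st A. \<forall>y \<in> st A. f (jn A x y) = jn B (f x) (f y)) \<and>
     f (jbot A) = jbot B \<and>
     (\<forall>a. \<forall>x \<in> st A. f (tr A a x) = tr B a (f x)) \<and>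
     f (init A) = init B \<and>
     (\<forall>x \<in> st A. x \<in> fin A \<longleftrightarrow> f x \<in> fin B)"

definition jdual :: "('s, 'a, 'z) jdfa_scheme \<Rightarrow> ('s, 'a) jdfa" where
  "jdual A = (let s0' = (THE t. t \<in> st A - fin A \<and> (\<forall>t' \<in> st A - fin A. le A t' t)) in
     \<lparr> st = st A,
       le = (\<lambda>x y. le A y x),
       tr = (\<lambda>a s. THE t. t \<in> st A \<and> le A (tr A a t) s \<and>
                     (\<forall>t' \<in> st A. le A (tr A a t') s \<longrightarrow> le A t' t)),
       init = s0',
       fin = {s \<in> st A. \<not> le A (init A) s} \<rparr>)"

record ('q, 'a) nfa =
  nst   :: "'q set"
  ntr   :: "'a \<Rightarrow> 'q \<Rightarrow> 'q set"
  ninit :: "'q set"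
  nfin  :: "'q set"

definition pow_dfa :: "('q, 'a) nfa \<Rightarrow> ('q set, 'a) jdfa" where
  "pow_dfa N = \<lparr> st = Pow (nst N), le = (\<subseteq>),
     tr = (\<lambda>a X. \<Union> (ntr N a ` X)), init = ninit N,
     fin = {X \<in> Pow (nst N). X \<inter> nfin N \<noteq> {}} \<rparr>"

text \<open>minDfa(L): states are the left derivatives of L (a dfa, viewed as an
  automaton with singleton transition sets).\<close>
definition minDfa :: "'a list set \<Rightarrow> ('a list set, 'a) nfa" where
  "minDfa L = \<lparr> nst = {lq v L | v. True}, ntr = (\<lambda>a K. {lq [a] K}),
     ninit = {L}, nfin = {K. (\<exists>v. K = lq v L) \<and> [] \<in> K} \<rparr>"

definition blq_dfa :: "'a list set \<Rightarrow> ('a list set, 'a) jdfa" where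
  "blq_dfa L = \<lparr> st = BLQ L, le = (\<subseteq>), tr = (\<lambda>a K. lq [a] K), init = L,
     fin = {K \<in> BLQ L. [] \<in> K} \<rparr>"

text \<open>Every representative w of each element is used (this agrees with the
  formula provided it is well defined, which is asserted in the theorem).\<close>
definition iso_map :: "'a list set \<Rightarrow> 'a list set set \<Rightarrow> 'a list set" where
  "iso_map L X = \<Inter> {- At L (rev w) | w. lq w (lrev L) \<in> X}"

end

theory Submission
  imports Defs
begin

(* Let ctx L x = {u. u x \<in> L} be the set of left contexts of x. Since x \<in> u\<^sup>-\<^sup>1 L iff
   u \<in> ctx L x, the boolean algebra BLQ(L) consists exactly of the sets saturated under
   ctx L x = ctx L y (finitely many classes, as L is regular), and its atoms are these classes.
   Up to reversal w\<^sup>-\<^sup>1 L\<^sup>r is ctx L (w\<^sup>r), so the quotients of L\<^sup>r correspond to the atoms,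
   and the map sends X to the set of words z with (z\<^sup>r)\<^sup>-\<^sup>1 L\<^sup>r \<notin> X: the complement of a
   preimage. Hence it turns unions into intersections, and it carries the transition
   K \<mapsto> a\<^sup>-\<^sup>1 K of minDfa(L\<^sup>r) to the largest saturated t with a\<^sup>-\<^sup>1 t contained in a given
   set, which is the transition of the dual. *)

section \<open>Left contexts and the boolean algebra BLQ(L)\<close>

definition ctx :: "'a list set \<Rightarrow> 'a list \<Rightarrow> 'a list set" where
  "ctx L x = {u. u @ x \<in> L}"

lemma mem_lq_iff_mem_ctx: "x \<in> lq u L \<longleftrightarrow> u \<in> ctx L x"
  by (simp add: lq_def ctx_def)

lemma lq_Nil [simp]: "lq [] L = L"
  by (simp add: lq_def)

lemma lq_Cons_lq: "lq [a] (lq v L) = lq (v @ [a]) L"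
  by (simp add: lq_def)

lemma regular_finite_lq:
  assumes "regular L" shows "finite (range (\<lambda>u. lq u L))"
proof -
  obtain Q :: "nat set" and \<delta> q0 F where Q: "finite Q" "q0 \<in> Q" "\<forall>a q. q \<in> Q \<longrightarrow> \<delta> a q \<in> Q"
    and L: "L = {w. fold \<delta> w q0 \<in> F}"
    using assms unfolding regular_def by blast
  have "lq u L = (\<lambda>q. {w. fold \<delta> w q \<in> F}) (fold \<delta> u q0)" for u
    by (simp add: L lq_def)
  moreover have "fold \<delta> u q0 \<in> Q" for u
    using Q(2,3) by (induction u rule: rev_induct) auto
  ultimately have "range (\<lambda>u. lq u L) \<subseteq> (\<lambda>q. {w. fold \<delta> w q \<in> F}) ` Q"
    by blast
  then show ?thesis
    using Q(1) by (rule finite_subset[OF _ finite_imageI])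
qed

lemma regular_finite_ctx:
  assumes "regular L" shows "finite (range (ctx L))"
proof -
  have "range (ctx L) \<subseteq> (\<lambda>S. {u. lq u L \<in> S}) ` Pow (range (\<lambda>u. lq u L))"
  proof (rule image_subsetI)
    fix x
    have "ctx L x = (\<lambda>S. {u. lq u L \<in> S}) {K \<in> range (\<lambda>u. lq u L). x \<in> K}"
      by (auto simp: mem_lq_iff_mem_ctx)
    moreover have "{K \<in> range (\<lambda>u. lq u L). x \<in> K} \<in> Pow (range (\<lambda>u. lq u L))"
      by blast
    ultimately show "ctx L x \<in> (\<lambda>S. {u. lq u L \<in> S}) ` Pow (range (\<lambda>u. lq u L))"
      by (rule image_eqI)
  qed
  then show ?thesis
    by (rule finite_subset) (simp add: regular_finite_lq[OF assms])
qed

lemma mem_lrev_iff: "x \<in> lrev L \<longleftrightarrow> rev x \<in> L"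
  unfolding lrev_def by (metis image_iff rev_rev_ident)

lemma lq_lrev: "lq v (lrev L) = rev ` ctx L (rev v)"
proof -
  have "w \<in> lq v (lrev L) \<longleftrightarrow> rev w \<in> ctx L (rev v)" for w
    by (simp add: lq_def ctx_def mem_lrev_iff)
  moreover have "w \<in> rev ` C \<longleftrightarrow> rev w \<in> C" for w :: "'a list" and C
    by (force simp: image_iff)
  ultimately show ?thesis
    by blast
qed

lemma lq_lrev_eq_iff: "lq u (lrev L) = lq v (lrev L) \<longleftrightarrow> ctx L (rev u) = ctx L (rev v)"
  by (simp add: lq_lrev inj_image_eq_iff)

lemma BLQ_saturated: "K \<in> BLQ L \<Longrightarrow> ctx L x = ctx L y \<Longrightarrow> x \<in> K \<longleftrightarrow> y \<in> K"
  by (induction K rule: BLQ.induct) (auto simp: mem_lq_iff_mem_ctx)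

lemma BLQ_Inter: "finite F \<Longrightarrow> F \<subseteq> BLQ L \<Longrightarrow> \<Inter> F \<in> BLQ L"
  by (induction F rule: finite_induct) (auto intro: BLQ.intros)

lemma BLQ_Union: "finite F \<Longrightarrow> F \<subseteq> BLQ L \<Longrightarrow> \<Union> F \<in> BLQ L"
  by (induction F rule: finite_induct) (auto intro: BLQ.intros)

lemma ctx_class_in_BLQ:
  assumes "regular L" shows "{y. ctx L y = ctx L x} \<in> BLQ L"
proof -
  have "y \<in> (\<Inter>u. if x \<in> lq u L then lq u L else - lq u L) \<longleftrightarrow> (\<forall>u. x \<in> lq u L \<longleftrightarrow> y \<in> lq u L)" for y
    by auto
  then have "y \<in> (\<Inter>u. if x \<in> lq u L then lq u L else - lq u L) \<longleftrightarrow> ctx L y = ctx L x" for y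
    by (auto simp: mem_lq_iff_mem_ctx)
  then have "{y. ctx L y = ctx L x} = (\<Inter>u. if x \<in> lq u L then lq u L else - lq u L)"
    by blast
  also have "\<dots> \<in> BLQ L"
    using regular_finite_lq[OF assms]
    by (subst image_image[symmetric, of "\<lambda>K. if x \<in> K then K else - K"])
      (auto intro: BLQ_Inter BLQ.intros)
  finally show ?thesis .
qed

lemma BLQ_iff:
  assumes "regular L"
  shows "K \<in> BLQ L \<longleftrightarrow> (\<forall>x y. ctx L x = ctx L y \<longrightarrow> x \<in> K \<longrightarrow> y \<in> K)"
proof
  assume "\<forall>x y. ctx L x = ctx L y \<longrightarrow> x \<in> K \<longrightarrow> y \<in> K"
  then have "K = \<Union> ((\<lambda>x. {y. ctx L y = ctx L x}) ` K)"
    by auto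
  also have "\<dots> \<in> BLQ L"
  proof (rule BLQ_Union)
    have "(\<lambda>x. {y. ctx L y = ctx L x}) ` K \<subseteq> (\<lambda>C. {y. ctx L y = C}) ` range (ctx L)"
      by blast
    then show "finite ((\<lambda>x. {y. ctx L y = ctx L x}) ` K)"
      using regular_finite_ctx[OF assms] by (rule finite_subset[OF _ finite_imageI])
    show "(\<lambda>x. {y. ctx L y = ctx L x}) ` K \<subseteq> BLQ L"
      using ctx_class_in_BLQ[OF assms] by blast
  qed
  finally show "K \<in> BLQ L" .
qed (use BLQ_saturated in blast)

lemma finite_BLQ:
  assumes "regular L" shows "finite (BLQ L)"
proof -
  have "BLQ L \<subseteq> (\<lambda>S. ctx L -` S) ` Pow (range (ctx L))"
  proof
    fix K assume "K \<in> BLQ L"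
    then have "K = ctx L -` ctx L ` K"
      by (auto simp: BLQ_iff[OF assms])
    moreover have "ctx L ` K \<in> Pow (range (ctx L))"
      by blast
    ultimately show "K \<in> (\<lambda>S. ctx L -` S) ` Pow (range (ctx L))"
      by (rule image_eqI)
  qed
  then show ?thesis
    by (rule finite_subset) (simp add: regular_finite_ctx[OF assms])
qed

lemma At_eq:
  assumes "regular L" shows "At L x = {y. ctx L y = ctx L x}"
  unfolding At_def
proof (rule the_equality)
  let ?C = "{y. ctx L y = ctx L x}"
  have "B = {} \<or> B = ?C" if B: "B \<in> BLQ L" "B \<subseteq> ?C" for B
  proof (cases "B = {}")
    case False
    then obtain y where "y \<in> B" "ctx L y = ctx L x"
      using B(2) by blast
    then have "?C \<subseteq> B"
      using B(1) unfolding BLQ_iff[OF assms] by blast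
    then show ?thesis
      using B(2) by blast
  qed simp
  then show "blq_atom L ?C \<and> x \<in> ?C"
    unfolding blq_atom_def using ctx_class_in_BLQ[OF assms] by blast
  show "A = ?C" if "blq_atom L A \<and> x \<in> A" for A
  proof -
    have "A \<in> BLQ L" "x \<in> A"
      using that by (auto simp: blq_atom_def)
    then have "?C \<subseteq> A"
      unfolding BLQ_iff[OF assms] by blast
    moreover have "?C \<noteq> {}"
      by blast
    ultimately show ?thesis
      using that ctx_class_in_BLQ[OF assms] unfolding blq_atom_def by blast
  qed
qed

section \<open>JSL-dfas of sets\<close>

lemma jn_eq_Un: "le A = (\<subseteq>) \<Longrightarrow> x \<union> y \<in> st A \<Longrightarrow> jn A x y = x \<union> y"
  unfolding jn_def by (rule the_equality) auto

lemma jn_eq_Int: "le A = (\<lambda>x y. y \<subseteq> x) \<Longrightarrow> x \<inter> y \<in> st A \<Longrightarrow> jn A x y = x \<inter> y"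
  unfolding jn_def by (rule the_equality) auto

lemma jbot_eq_empty: "le A = (\<subseteq>) \<Longrightarrow> {} \<in> st A \<Longrightarrow> jbot A = {}"
  unfolding jbot_def by (rule the_equality) auto

lemma jbot_eq_UNIV: "le A = (\<lambda>x y. y \<subseteq> x) \<Longrightarrow> UNIV \<in> st A \<Longrightarrow> jbot A = UNIV"
  unfolding jbot_def by (rule the_equality) auto

lemma jsl_dfa_subset_orderI:
  assumes "le A = (\<subseteq>)" "finite (st A)" "{} \<in> st A"
    and "\<And>x y. x \<in> st A \<Longrightarrow> y \<in> st A \<Longrightarrow> x \<union> y \<in> st A"
    and "\<And>a x. x \<in> st A \<Longrightarrow> tr A a x \<in> st A"
    and "\<And>a x y. x \<in> st A \<Longrightarrow> y \<in> st A \<Longrightarrow> tr A a (x \<union> y) = tr A a x \<union> tr A a y"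
    and "\<And>a. tr A a {} = {}" "init A \<in> st A" "sf \<in> st A" "fin A = {s \<in> st A. \<not> s \<subseteq> sf}"
  shows "jsl_dfa A"
  unfolding jsl_dfa_def using assms by (simp add: jn_eq_Un jbot_eq_empty) blast

lemma jsl_dfa_supset_orderI:
  assumes "le A = (\<lambda>x y. y \<subseteq> x)" "finite (st A)" "UNIV \<in> st A"
    and "\<And>x y. x \<in> st A \<Longrightarrow> y \<in> st A \<Longrightarrow> x \<inter> y \<in> st A"
    and "\<And>a x. x \<in> st A \<Longrightarrow> tr A a x \<in> st A"
    and "\<And>a x y. x \<in> st A \<Longrightarrow> y \<in> st A \<Longrightarrow> tr A a (x \<inter> y) = tr A a x \<inter> tr A a y"
    and "\<And>a. tr A a UNIV = UNIV" "init A \<in> st A" "sf \<in> st A" "fin A = {s \<in> st A. \<not> sf \<subseteq> s}"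
  shows "jsl_dfa A"
  unfolding jsl_dfa_def using assms by (simp add: jn_eq_Int jbot_eq_UNIV) blast

lemma jsl_dfa_pow_dfa:
  assumes "finite (nst N)" "ninit N \<subseteq> nst N" "\<And>a q. q \<in> nst N \<Longrightarrow> ntr N a q \<subseteq> nst N"
  shows "jsl_dfa (pow_dfa N)"
proof (rule jsl_dfa_subset_orderI[where sf = "nst N - nfin N"])
  show "tr (pow_dfa N) a X \<in> st (pow_dfa N)" if "X \<in> st (pow_dfa N)" for a X
    using that assms(3) by (auto simp: pow_dfa_def)
qed (use assms in \<open>auto simp: pow_dfa_def\<close>)

lemma jdual_simps:
  "st (jdual A) = st A" "le (jdual A) = (\<lambda>x y. le A y x)" "fin (jdual A) = {s \<in> st A. \<not> le A (init A) s}"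
  by (simp_all add: jdual_def Let_def)

lemma jdual_tr_eqI:
  assumes "le A = (\<subseteq>)" "t \<in> st A" "tr A a t \<subseteq> s"
    and "\<And>t'. t' \<in> st A \<Longrightarrow> tr A a t' \<subseteq> s \<Longrightarrow> t' \<subseteq> t"
  shows "tr (jdual A) a s = t"
proof -
  have "tr (jdual A) a s = (THE t. t \<in> st A \<and> tr A a t \<subseteq> s \<and> (\<forall>t' \<in> st A. tr A a t' \<subseteq> s \<longrightarrow> t' \<subseteq> t))"
    by (simp add: jdual_def Let_def assms(1))
  also have "\<dots> = t"
    using assms(2-4) by (intro the_equality) (simp, blast)
  finally show ?thesis .
qed

lemma jdual_init_eqI:
  assumes "le A = (\<subseteq>)" "t \<in> st A - fin A" "\<And>t'. t' \<in> st A - fin A \<Longrightarrow> t' \<subseteq> t"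
  shows "init (jdual A) = t"
proof -
  have "init (jdual A) = (THE t. t \<in> st A - fin A \<and> (\<forall>t' \<in> st A - fin A. t' \<subseteq> t))"
    by (simp add: jdual_def Let_def assms(1))
  also have "\<dots> = t"
    using assms(2-3) by (intro the_equality) (simp, blast)
  finally show ?thesis .
qed

section \<open>The powerset automaton and the dual of BLQ(L)\<close>

lemma pow_dfa_minDfa_simps:
  "st (pow_dfa (minDfa M)) = Pow (range (\<lambda>v. lq v M))"
  "le (pow_dfa (minDfa M)) = (\<subseteq>)"
  "tr (pow_dfa (minDfa M)) a X = lq [a] ` X"
  "init (pow_dfa (minDfa M)) = {M}"
  "fin (pow_dfa (minDfa M)) = {X \<in> Pow (range (\<lambda>v. lq v M)). \<exists>K \<in> X. [] \<in> K}"
  by (auto simp: pow_dfa_def minDfa_def full_SetCompr_eq)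

lemma finite_lq_lrev:
  assumes "regular L" shows "finite (range (\<lambda>v. lq v (lrev L)))"
proof -
  have "range (\<lambda>v. lq v (lrev L)) \<subseteq> image rev ` range (ctx L)"
    by (auto simp: lq_lrev)
  then show ?thesis
    using regular_finite_ctx[OF assms] by (rule finite_subset[OF _ finite_imageI])
qed

lemma jsl_dfa_pow_minDfa_lrev:
  assumes "regular L" shows "jsl_dfa (pow_dfa (minDfa (lrev L)))"
proof (rule jsl_dfa_pow_dfa)
  show "finite (nst (minDfa (lrev L)))"
    using finite_lq_lrev[OF assms] by (simp add: minDfa_def full_SetCompr_eq)
  show "ninit (minDfa (lrev L)) \<subseteq> nst (minDfa (lrev L))"
    by (simp add: minDfa_def) (metis lq_Nil)
  show "ntr (minDfa (lrev L)) a K \<subseteq> nst (minDfa (lrev L))" if "K \<in> nst (minDfa (lrev L))" for a K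
    using that by (auto simp: minDfa_def lq_Cons_lq)
qed

lemma jdual_blq_dfa_simps:
  "st (jdual (blq_dfa L)) = BLQ L"
  "le (jdual (blq_dfa L)) = (\<lambda>x y. y \<subseteq> x)"
  "fin (jdual (blq_dfa L)) = {s \<in> BLQ L. \<not> L \<subseteq> s}"
  by (simp_all add: jdual_simps blq_dfa_def)

lemma jdual_blq_dfa_tr:
  assumes "regular L"
  shows "tr (jdual (blq_dfa L)) a s = {z. \<forall>y. ctx L z = ctx L (a # y) \<longrightarrow> y \<in> s}"
proof (rule jdual_tr_eqI)
  let ?t = "{z. \<forall>y. ctx L z = ctx L (a # y) \<longrightarrow> y \<in> s}"
  show "le (blq_dfa L) = (\<subseteq>)"
    by (simp add: blq_dfa_def)
  show "?t \<in> st (blq_dfa L)"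
    by (simp add: blq_dfa_def BLQ_iff[OF assms])
  show "tr (blq_dfa L) a ?t \<subseteq> s"
    by (auto simp: blq_dfa_def lq_def)
  show "t \<subseteq> ?t" if t: "t \<in> st (blq_dfa L)" "tr (blq_dfa L) a t \<subseteq> s" for t
  proof
    fix z assume "z \<in> t"
    have "a # y \<in> t" if "ctx L z = ctx L (a # y)" for y
      using BLQ_saturated[OF _ that] t(1) \<open>z \<in> t\<close> by (simp add: blq_dfa_def)
    then show "z \<in> ?t"
      using t(2) by (auto simp: blq_dfa_def lq_def)
  qed
qed

lemma jdual_blq_dfa_init:
  assumes "regular L" shows "init (jdual (blq_dfa L)) = {z. ctx L z \<noteq> ctx L []}"
proof (rule jdual_init_eqI)
  show "le (blq_dfa L) = (\<subseteq>)"
    by (simp add: blq_dfa_def)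
  have "{z. ctx L z \<noteq> ctx L []} \<in> BLQ L"
    unfolding BLQ_iff[OF assms] mem_Collect_eq by blast
  then show "{z. ctx L z \<noteq> ctx L []} \<in> st (blq_dfa L) - fin (blq_dfa L)"
    by (simp add: blq_dfa_def)
  show "t \<subseteq> {z. ctx L z \<noteq> ctx L []}" if "t \<in> st (blq_dfa L) - fin (blq_dfa L)" for t
  proof -
    have "t \<in> BLQ L" "[] \<notin> t"
      using that by (simp_all add: blq_dfa_def)
    then show ?thesis
      using BLQ_saturated[of t L _ "[]"] by blast
  qed
qed

lemma jsl_dfa_jdual_blq_dfa:
  assumes "regular L" shows "jsl_dfa (jdual (blq_dfa L))"
proof (rule jsl_dfa_supset_orderI[where sf = L])
  show "L \<in> st (jdual (blq_dfa L))"
    using BLQ.gen[of "[]" L] by (simp add: jdual_blq_dfa_simps)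
  show "tr (jdual (blq_dfa L)) a x \<in> st (jdual (blq_dfa L))" for a x
    unfolding jdual_blq_dfa_tr[OF assms] jdual_blq_dfa_simps BLQ_iff[OF assms] by simp
  show "init (jdual (blq_dfa L)) \<in> st (jdual (blq_dfa L))"
    unfolding jdual_blq_dfa_init[OF assms] jdual_blq_dfa_simps BLQ_iff[OF assms] by simp
  show "tr (jdual (blq_dfa L)) a (x \<inter> y) = tr (jdual (blq_dfa L)) a x \<inter> tr (jdual (blq_dfa L)) a y"
    and "tr (jdual (blq_dfa L)) a UNIV = UNIV" for a x y
    unfolding jdual_blq_dfa_tr[OF assms] by auto
qed (simp_all add: jdual_blq_dfa_simps finite_BLQ[OF assms] BLQ.intros)

section \<open>The isomorphism\<close>

lemma mem_iso_map:
  assumes "regular L" shows "z \<in> iso_map L X \<longleftrightarrow> lq (rev z) (lrev L) \<notin> X"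
proof -
  have "z \<in> iso_map L X \<longleftrightarrow> (\<forall>w. lq w (lrev L) \<in> X \<longrightarrow> lq (rev z) (lrev L) \<noteq> lq w (lrev L))"
    by (auto simp: iso_map_def At_eq[OF assms] lq_lrev_eq_iff)
  then show ?thesis
    by auto
qed

lemma bij_betw_iso_map:
  assumes "regular L"
  shows "bij_betw (iso_map L) (Pow (range (\<lambda>v. lq v (lrev L)))) (BLQ L)"
proof (rule bij_betw_imageI)
  have mem: "lq v (lrev L) \<in> X \<longleftrightarrow> rev v \<notin> iso_map L X" for v X
    by (simp add: mem_iso_map[OF assms])
  show "inj_on (iso_map L) (Pow (range (\<lambda>v. lq v (lrev L))))"
  proof (rule inj_onI, rule set_eqI)
    fix X Y K assume X: "X \<in> Pow (range (\<lambda>v. lq v (lrev L)))" and Y: "Y \<in> Pow (range (\<lambda>v. lq v (lrev L)))"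
      and eq: "iso_map L X = iso_map L Y"
    show "K \<in> X \<longleftrightarrow> K \<in> Y"
    proof (cases "K \<in> range (\<lambda>v. lq v (lrev L))")
      case True
      then obtain v where "K = lq v (lrev L)"
        by blast
      then show ?thesis
        using mem[of v X] mem[of v Y] eq by simp
    next
      case False
      then show ?thesis
        using X Y by blast
    qed
  qed
  show "iso_map L ` Pow (range (\<lambda>v. lq v (lrev L))) = BLQ L"
  proof (intro equalityI subsetI)
    fix K assume "K \<in> iso_map L ` Pow (range (\<lambda>v. lq v (lrev L)))"
    then obtain X where K: "K = iso_map L X"
      by blast
    have "x \<in> K \<longrightarrow> y \<in> K" if "ctx L x = ctx L y" for x y
    proof -
      have "lq (rev x) (lrev L) = lq (rev y) (lrev L)"
        using that by (simp add: lq_lrev_eq_iff)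
      then show ?thesis
        by (simp add: K mem_iso_map[OF assms])
    qed
    then show "K \<in> BLQ L"
      unfolding BLQ_iff[OF assms] by blast
  next
    fix K assume K: "K \<in> BLQ L"
    let ?X = "{lq (rev z') (lrev L) | z'. z' \<notin> K}"
    have "z \<in> iso_map L ?X \<longleftrightarrow> z \<in> K" for z
    proof -
      have "z \<in> iso_map L ?X \<longleftrightarrow> \<not> (\<exists>z'. z' \<notin> K \<and> lq (rev z) (lrev L) = lq (rev z') (lrev L))"
        by (auto simp: mem_iso_map[OF assms])
      also have "\<dots> \<longleftrightarrow> \<not> (\<exists>z'. z' \<notin> K \<and> ctx L z = ctx L z')"
        by (simp add: lq_lrev_eq_iff)
      also have "\<dots> \<longleftrightarrow> z \<in> K"
        using BLQ_saturated[OF K] by blast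
      finally show ?thesis .
    qed
    then have "K = iso_map L ?X"
      by blast
    moreover have "?X \<in> Pow (range (\<lambda>v. lq v (lrev L)))"
      by blast
    ultimately show "K \<in> iso_map L ` Pow (range (\<lambda>v. lq v (lrev L)))"
      by (rule image_eqI)
  qed
qed

lemma iso_map_Un:
  assumes "regular L" shows "iso_map L (X \<union> Y) = iso_map L X \<inter> iso_map L Y"
  by (auto simp: mem_iso_map[OF assms])

lemma iso_map_empty:
  assumes "regular L" shows "iso_map L {} = UNIV"
  by (auto simp: mem_iso_map[OF assms])

lemma iso_map_lq_image:
  assumes "regular L" "X \<subseteq> range (\<lambda>v. lq v (lrev L))"
  shows "iso_map L (lq [a] ` X) = {z. \<forall>y. ctx L z = ctx L (a # y) \<longrightarrow> y \<in> iso_map L X}"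
proof -
  have image: "lq [a] ` X = {lq (rev (a # y)) (lrev L) | y. lq (rev y) (lrev L) \<in> X}"
  proof (intro equalityI subsetI)
    fix K assume "K \<in> lq [a] ` X"
    then obtain v where "lq v (lrev L) \<in> X" "K = lq [a] (lq v (lrev L))"
      using assms(2) by blast
    then show "K \<in> {lq (rev (a # y)) (lrev L) | y. lq (rev y) (lrev L) \<in> X}"
      by (auto simp: lq_Cons_lq intro!: exI[of _ "rev v"])
  qed (auto simp: lq_Cons_lq[symmetric])
  have "z \<in> iso_map L (lq [a] ` X) \<longleftrightarrow> (\<forall>y. ctx L z = ctx L (a # y) \<longrightarrow> y \<in> iso_map L X)" for z
  proof -
    have "z \<in> iso_map L (lq [a] ` X) \<longleftrightarrow>
        \<not> (\<exists>y. lq (rev y) (lrev L) \<in> X \<and> lq (rev z) (lrev L) = lq (rev (a # y)) (lrev L))"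
      unfolding image by (auto simp: mem_iso_map[OF assms(1)])
    also have "\<dots> \<longleftrightarrow> (\<forall>y. ctx L z = ctx L (a # y) \<longrightarrow> y \<in> iso_map L X)"
      by (auto simp: mem_iso_map[OF assms(1)] lq_lrev_eq_iff simp del: rev.simps)
    finally show ?thesis .
  qed
  then show ?thesis
    by blast
qed

lemma iso_map_init:
  assumes "regular L" shows "iso_map L {lrev L} = {z. ctx L z \<noteq> ctx L []}"
proof -
  have "z \<in> iso_map L {lrev L} \<longleftrightarrow> ctx L z \<noteq> ctx L []" for z
  proof -
    have "z \<in> iso_map L {lrev L} \<longleftrightarrow> lq (rev z) (lrev L) \<noteq> lq (rev []) (lrev L)"
      by (simp add: mem_iso_map[OF assms])
    also have "\<dots> \<longleftrightarrow> ctx L z \<noteq> ctx L []"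
      unfolding lq_lrev_eq_iff by simp
    finally show ?thesis .
  qed
  then show ?thesis
    by blast
qed

lemma Nil_mem_lq_lrev_iff: "[] \<in> lq v (lrev L) \<longleftrightarrow> rev v \<in> L"
  by (simp add: lq_def mem_lrev_iff)

lemma iso_map_fin:
  assumes "regular L" "X \<subseteq> range (\<lambda>v. lq v (lrev L))"
  shows "(\<exists>K \<in> X. [] \<in> K) \<longleftrightarrow> \<not> L \<subseteq> iso_map L X"
proof -
  have "(\<exists>K \<in> X. [] \<in> K) \<longleftrightarrow> (\<exists>v. lq v (lrev L) \<in> X \<and> [] \<in> lq v (lrev L))"
    using assms(2) by blast
  also have "\<dots> \<longleftrightarrow> (\<exists>v. lq v (lrev L) \<in> X \<and> rev v \<in> L)"
    by (simp add: Nil_mem_lq_lrev_iff)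
  also have "\<dots> \<longleftrightarrow> (\<exists>z \<in> L. lq (rev z) (lrev L) \<in> X)"
    by (metis rev_rev_ident)
  also have "\<dots> \<longleftrightarrow> \<not> L \<subseteq> iso_map L X"
    by (auto simp: mem_iso_map[OF assms(1)])
  finally show ?thesis .
qed

lemma iso_map_in_BLQ:
  assumes "regular L" "X \<subseteq> range (\<lambda>v. lq v (lrev L))"
  shows "iso_map L X \<in> BLQ L"
  using bij_betw_apply[OF bij_betw_iso_map[OF assms(1)]] assms(2) by blast

lemma jsl_iso_iso_map:
  assumes "regular L"
  shows "jsl_iso (pow_dfa (minDfa (lrev L))) (jdual (blq_dfa L)) (iso_map L)"
proof -
  let ?P = "pow_dfa (minDfa (lrev L))" and ?D = "jdual (blq_dfa L)"
  have jn_P: "jn ?P X Y = X \<union> Y" if "X \<in> st ?P" "Y \<in> st ?P" for X Y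
    using that by (intro jn_eq_Un) (simp_all add: pow_dfa_minDfa_simps)
  have jn_D: "jn ?D K K' = K \<inter> K'" if "K \<in> BLQ L" "K' \<in> BLQ L" for K K'
    using that by (intro jn_eq_Int) (simp_all add: jdual_blq_dfa_simps BLQ.inter)
  have jbot_P: "jbot ?P = {}"
    by (intro jbot_eq_empty) (simp_all add: pow_dfa_minDfa_simps)
  have jbot_D: "jbot ?D = UNIV"
    by (intro jbot_eq_UNIV) (simp_all add: jdual_blq_dfa_simps BLQ.univ)
  have in_BLQ: "iso_map L X \<in> BLQ L" if "X \<in> st ?P" for X
    using that by (simp add: pow_dfa_minDfa_simps iso_map_in_BLQ[OF assms])
  show ?thesis
    unfolding jsl_iso_def
  proof (intro conjI ballI allI)
    show "bij_betw (iso_map L) (st ?P) (st ?D)"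
      by (simp add: pow_dfa_minDfa_simps jdual_blq_dfa_simps bij_betw_iso_map[OF assms])
    show "iso_map L (jn ?P X Y) = jn ?D (iso_map L X) (iso_map L Y)" if "X \<in> st ?P" "Y \<in> st ?P" for X Y
      using that by (simp add: jn_P jn_D in_BLQ iso_map_Un[OF assms])
    show "iso_map L (jbot ?P) = jbot ?D"
      by (simp add: jbot_P jbot_D iso_map_empty[OF assms])
    show "iso_map L (tr ?P a X) = tr ?D a (iso_map L X)" if "X \<in> st ?P" for a X
      using that by (simp add: pow_dfa_minDfa_simps jdual_blq_dfa_tr[OF assms] iso_map_lq_image[OF assms])
    show "iso_map L (init ?P) = init ?D"
      by (simp add: pow_dfa_minDfa_simps jdual_blq_dfa_init[OF assms] iso_map_init[OF assms])
    show "X \<in> fin ?P \<longleftrightarrow> iso_map L X \<in> fin ?D" if "X \<in> st ?P" for X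
      using that in_BLQ[OF that] by (simp add: pow_dfa_minDfa_simps jdual_blq_dfa_simps iso_map_fin[OF assms])
  qed
qed

theorem proposition3p12:
  fixes L :: "('a::finite) list set"
  assumes "regular L"
  shows "(\<forall>u v. lq u (lrev L) = lq v (lrev L) \<longrightarrow> At L (rev u) = At L (rev v)) \<and>
         jsl_dfa (pow_dfa (minDfa (lrev L))) \<and>
         jsl_dfa (jdual (blq_dfa L)) \<and>
         jsl_iso (pow_dfa (minDfa (lrev L))) (jdual (blq_dfa L)) (iso_map L)"
  using assms by (simp add: At_eq lq_lrev_eq_iff jsl_dfa_pow_minDfa_lrev jsl_dfa_jdual_blq_dfa jsl_iso_iso_map)

end
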